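(* Let $h(z)\in\mathbb{C}[z]$ be a polynomial which cannot be written as a polynomial in $z^m$ for any integer $m>1$. Then there is a nonempty open set $U\subset D$ such that $\frac{h(z)-h(w)}{z-w}\neq 0$ for all $w\in U$ and all $z\in\overline{D}$.
   Context: $D=\{z\in\mathbb{C}:|z|<1\}$ and $\overline{D}$ is its closure. The quotient $\frac{h(z)-h(w)}{z-w}$ is understood as the polynomial in $(z,w)$ obtained by division (so at $z=w$ it equals $h'(w)$). *)

theory Defs
  imports "HOL-Analysis.Analysis" "HOL-Computational_Algebra.Polynomial"
begin

text \<open>Evaluation of the divided-difference polynomial (h(z) - h(w))/(z - w) in C[z,w];
  on the diagonal z = w it equals h'(w).\<close>
definition diff_quot :: "complex poly \<Rightarrow> complex \<Rightarrow> complex \<Rightarrow> complex" where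
  "diff_quot h z w =
     (if z = w then poly (pderiv h) w else (poly h z - poly h w) / (z - w))"

end

theory Submission
  imports Defs "HOL-Computational_Algebra.Field_as_Ring" "HOL-Computational_Algebra.Fundamental_Theorem_Algebra"
    "Subresultants.Subresultant_Gcd"
begin

text \<open>
  Fix a unimodular c and let w maximise Re (c h) over the closed unit disc. Every z in the disc
  with h(z) = h(w) is another maximiser; the local expansion of h at a maximiser shows that it lies
  on the unit circle and that c w h'(w) is a positive real. Hence h'(w) \<noteq> 0 and w determines c,
  so the maximisers form an infinite subset of the circle. If one of them, w, has no twin (a
  different point z of the circle with h(z) = h(w)), then (h(z) - h(w))/(z - w) has no zero on the
  closed disc, and by compactness the same holds for all w' near w.

  The twins are finite unless h is a polynomial in z^m. On the torus |z| = |w| = 1 the divided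
  difference F(z, w) vanishes together with the polynomial G(z, w) obtained by conjugating F and
  clearing the denominators of 1/z = cnj z, 1/w = cnj w. Infinitely many twins force the resultant
  of F and G (with respect to z) to vanish, so they have a common factor P of positive degree in z.
  The roots of F(-, w) grow at most linearly as w \<rightarrow> \<infinity>, those of G(-, w) shrink at least linearly
  as w \<rightarrow> 0; by Vieta this makes P homogeneous, so F(\<zeta> w, w) = 0 identically for a root \<zeta> of
  P(-, 1), i.e. h(\<zeta> w) = h(w), and h is a polynomial in z^m.
\<close>

section \<open>Coefficients, roots and growth of one-variable polynomials\<close>

lemma degree_eqI:
  assumes "coeff p n \<noteq> 0" and "\<And>i. i > n \<Longrightarrow> coeff p i = 0"
  shows "degree p = n"
  by (meson antisym assms degree_le le_degree)

lemma poly_eq_sum_lessThan: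
  fixes p :: "'a::comm_semiring_1 poly"
  assumes "\<And>i. i \<ge> N \<Longrightarrow> coeff p i = 0"
  shows "poly p z = (\<Sum>i<N. coeff p i * z ^ i)"
proof -
  define M where "M = max N (Suc (degree p))"
  have "poly p z = (\<Sum>i\<le>degree p. coeff p i * z ^ i)" by (rule poly_altdef)
  also have "\<dots> = (\<Sum>i<M. coeff p i * z ^ i)"
    by (rule sum.mono_neutral_left) (auto simp: M_def coeff_eq_0)
  also have "\<dots> = (\<Sum>i<N. coeff p i * z ^ i)"
    by (rule sum.mono_neutral_right) (auto simp: M_def assms)
  finally show ?thesis .
qed

lemma poly_eq_0_if_bounded_near_0:
  fixes p :: "complex poly"
  assumes "\<delta> > 0" and "\<And>w. w \<noteq> 0 \<Longrightarrow> norm w \<le> \<delta> \<Longrightarrow> norm (poly p w) \<le> K * norm w"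
  shows "poly p 0 = 0"
proof -
  have "((\<lambda>w. norm (poly p w)) \<longlongrightarrow> norm (poly p 0)) (at (0::complex))"
    by (intro tendsto_intros isCont_tendsto_compose[of _ "poly p"]) (auto intro: continuous_intros)
  moreover have "((\<lambda>w. K * norm w) \<longlongrightarrow> K * norm (0::complex)) (at (0::complex))"
    by (intro tendsto_intros)
  moreover have "eventually (\<lambda>w. norm (poly p w) \<le> K * norm w) (at 0)"
    unfolding eventually_at using assms by (auto simp: dist_norm intro!: exI[of _ \<delta>])
  ultimately have "norm (poly p 0) \<le> K * norm (0::complex)"
    by (intro tendsto_le[of "at 0"]) auto
  thus ?thesis by simp
qed

lemma coeff_eq_0_if_bounded_near_0:
  fixes p :: "complex poly"
  assumes "\<delta> > 0" and bound: "\<And>w. w \<noteq> 0 \<Longrightarrow> norm w \<le> \<delta> \<Longrightarrow> norm (poly p w) \<le> K * norm w ^ e"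
    and "j < e"
  shows "coeff p j = 0"
proof (cases "p = 0")
  case False
  define k where "k = order 0 p"
  obtain q where p: "p = monom 1 k * q" and "\<not> [:0, 1:] dvd q"
    using order_decomp[OF False, of 0] by (auto simp: k_def monom_altdef)
  have "e \<le> k"
  proof (rule ccontr)
    assume "\<not> e \<le> k"
    have "poly q 0 = 0"
    proof (rule poly_eq_0_if_bounded_near_0[of "min \<delta> 1"])
      fix w :: complex assume w: "w \<noteq> 0" "norm w \<le> min \<delta> 1"
      have "norm w ^ k * norm (poly q w) \<le> norm w ^ k * (K * norm w ^ (e - k))"
        using bound[of w] w \<open>\<not> e \<le> k\<close>
        by (simp add: p poly_monom norm_mult norm_power mult_ac flip: power_add)
      then have "norm (poly q w) \<le> K * norm w ^ (e - k)" using w(1) by simp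
      also have "\<dots> \<le> \<bar>K\<bar> * norm w"
        using w \<open>\<not> e \<le> k\<close> power_decreasing[of 1 "e - k" "norm w"]
        by (intro order_trans[OF mult_right_mono[of K "\<bar>K\<bar>"] mult_left_mono]) auto
      finally show "norm (poly q w) \<le> \<bar>K\<bar> * norm w" .
    qed (use assms(1) in simp)
    with \<open>\<not> [:0, 1:] dvd q\<close> show False by (simp add: poly_eq_0_iff_dvd)
  qed
  then show ?thesis using assms(3) by (simp add: p coeff_monom_mult)
qed simp

lemma degree_le_if_bounded_at_infinity:
  fixes p :: "complex poly"
  assumes "\<And>w. norm w \<ge> 1 \<Longrightarrow> norm (poly p w) \<le> K * norm w ^ e"
  shows "degree p \<le> e"
proof (rule ccontr)
  assume "\<not> degree p \<le> e"
  hence e: "e < degree p" by simp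
  have "coeff (reflect_poly p) 0 = 0"
  proof (rule coeff_eq_0_if_bounded_near_0[of 1])
    fix u :: complex assume u: "u \<noteq> 0" "norm u \<le> 1"
    have "norm (inverse u) \<ge> 1" using u by (simp add: norm_inverse one_le_inverse_iff)
    hence bound: "norm (poly p (inverse u)) \<le> K * norm (inverse u) ^ e" by (rule assms)
    have "norm (poly (reflect_poly p) u) = norm u ^ degree p * norm (poly p (inverse u))"
      by (simp add: poly_reflect_poly_nz[OF u(1)] norm_mult norm_power)
    also have "\<dots> \<le> norm u ^ degree p * (K * norm (inverse u) ^ e)"
      using bound by (simp add: mult_left_mono)
    also have "\<dots> = K * norm u ^ (degree p - e) * (norm u ^ e * inverse (norm u) ^ e)"
      using e by (simp add: norm_inverse power_add[symmetric] mult_ac)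
    also have "\<dots> = K * norm u ^ (degree p - e)"
      using u by (simp add: power_mult_distrib[symmetric])
    finally show "norm (poly (reflect_poly p) u) \<le> K * norm u ^ (degree p - e)" .
  qed (use e in auto)
  moreover have "p \<noteq> 0" using e by auto
  ultimately show False by simp
qed

lemma coeff_eq_0_if_bounded_near_0_and_infinity:
  fixes p :: "complex poly"
  assumes "\<delta> > 0"
    and "\<And>w. (norm w \<ge> 1 \<or> w \<noteq> 0 \<and> norm w \<le> \<delta>) \<Longrightarrow> norm (poly p w) \<le> K * norm w ^ e"
    and "j \<noteq> e"
  shows "coeff p j = 0"
proof (cases "j < e")
  case True
  then show ?thesis using assms by (intro coeff_eq_0_if_bounded_near_0[of \<delta>]) auto
next
  case False
  have "degree p \<le> e" using assms by (intro degree_le_if_bounded_at_infinity) auto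
  then show ?thesis using False assms(3) by (intro coeff_eq_0) simp
qed

lemma norm_coeff_prod_linear_le:
  fixes r :: "nat \<Rightarrow> complex"
  assumes "\<And>i. i < m \<Longrightarrow> norm (r i) \<le> R" and "R \<ge> 0"
  shows "norm (coeff (\<Prod>i<m. [:- r i, 1:]) j) \<le> real (m choose j) * R ^ (m - j)"
  using assms(1)
proof (induction m arbitrary: j)
  case 0
  then show ?case by (cases j) auto
next
  case (Suc m)
  define P where "P = (\<Prod>i<m. [:- r i, 1:])"
  have IH: "norm (coeff P j) \<le> real (m choose j) * R ^ (m - j)" for j
    unfolding P_def using Suc by auto
  have rm: "norm (r m * coeff P j) \<le> R * (real (m choose j) * R ^ (m - j))"
    unfolding norm_mult using Suc.prems assms(2) by (intro mult_mono IH) auto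
  have prod: "(\<Prod>i<Suc m. [:- r i, 1:]) = [:- r m, 1:] * P" by (simp add: P_def mult.commute)
  show ?case
  proof (cases j)
    case 0
    then have "norm (coeff ([:- r m, 1:] * P) j) \<le> real (Suc m choose j) * R ^ (Suc m - j)"
      using rm by simp
    then show ?thesis by (simp only: prod)
  next
    case (Suc j')
    have "norm (coeff ([:- r m, 1:] * P) j) \<le> norm (coeff P j') + norm (r m * coeff P j)"
      by (simp add: Suc norm_triangle_ineq4)
    also have "\<dots> \<le> real (m choose j') * R ^ (m - j') + R * (real (m choose j) * R ^ (m - j))"
      by (intro add_mono IH rm)
    also have "\<dots> \<le> real (Suc m choose j) * R ^ (Suc m - j)"
    proof (cases "j \<le> m")
      case True
      then have "m - j' = Suc (m - j)" using Suc by simp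
      then have "R * R ^ (m - j) = R ^ (m - j')" by simp
      then show ?thesis using Suc True by (simp add: algebra_simps)
    next
      case False
      then have "m choose j = 0" by simp
      then show ?thesis using False Suc by (cases "j' = m") (auto simp: binomial_eq_0)
    qed
    finally show ?thesis by (simp only: prod)
  qed
qed

lemma norm_coeff_le_if_roots_bounded:
  fixes q :: "complex poly"
  assumes "q \<noteq> 0" and "R \<ge> 0" and roots: "\<And>z. poly q z = 0 \<Longrightarrow> norm z \<le> R"
  shows "norm (coeff q j) \<le> norm (lead_coeff q) * real (degree q choose j) * R ^ (degree q - j)"
proof -
  obtain r where q: "Polynomial.smult (lead_coeff q) (\<Prod>i<degree q. [:- r i, 1:]) = q"
    using complex_poly_decompose'[of q] by blast
  have "norm (r i) \<le> R" if "i < degree q" for i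
  proof (rule roots)
    have "poly (\<Prod>i<degree q. [:- r i, 1:]) (r i) = 0"
      using that by (auto simp: poly_prod intro!: prod_zero)
    then show "poly q (r i) = 0" by (subst q[symmetric]) simp
  qed
  then have "norm (coeff (\<Prod>i<degree q. [:- r i, 1:]) j) \<le> real (degree q choose j) * R ^ (degree q - j)"
    using assms(2) by (intro norm_coeff_prod_linear_le) auto
  then show ?thesis
    by (subst (1) q[symmetric]) (simp add: norm_mult mult_left_mono mult.assoc)
qed

lemma norm_root_le_if_coeffs_bounded:
  fixes q :: "complex poly"
  assumes "coeff q m \<noteq> 0" and "\<And>i. i > m \<Longrightarrow> coeff q i = 0" and "B \<ge> 0"
    and coeffs: "\<And>i. i < m \<Longrightarrow> norm (coeff q i) \<le> norm (coeff q m) * B ^ (m - i)"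
    and "poly q z = 0"
  shows "norm z \<le> 2 * B"
proof (rule ccontr)
  assume "\<not> norm z \<le> 2 * B"
  then have zB: "B \<le> norm z / 2" and "norm z > 0" using assms(3) by auto
  let ?a = "norm (coeff q m) * norm z ^ m"
  have "poly q z = (\<Sum>i<Suc m. coeff q i * z ^ i)"
    using assms(2) by (intro poly_eq_sum_lessThan) auto
  then have top: "coeff q m * z ^ m = - (\<Sum>i<m. coeff q i * z ^ i)"
    using assms(5) by (simp add: eq_neg_iff_add_eq_0 add.commute)
  have "norm (coeff q i * z ^ i) \<le> ?a * (1/2) ^ (m - i)" if "i < m" for i
  proof -
    have "norm (coeff q i) \<le> norm (coeff q m) * (norm z / 2) ^ (m - i)"
      using coeffs[OF that] zB assms(3) by (meson order_trans mult_left_mono norm_ge_zero power_mono)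
    then have "norm (coeff q i * z ^ i) \<le> norm (coeff q m) * (norm z / 2) ^ (m - i) * norm z ^ i"
      by (simp add: norm_mult norm_power mult_right_mono)
    also have "\<dots> = ?a * (1/2) ^ (m - i)"
      using that by (simp add: power_divide power_add[symmetric] field_simps)
    finally show ?thesis .
  qed
  then have "norm (\<Sum>i<m. coeff q i * z ^ i) \<le> (\<Sum>i<m. ?a * (1/2) ^ (m - i))"
    by (intro order_trans[OF norm_sum sum_mono]) auto
  also have "(\<Sum>i<m. ?a * (1/2) ^ (m - i)) = ?a * (\<Sum>i<m. (1/2) ^ (m - i))"
    by (simp add: sum_distrib_left)
  also have "(\<Sum>i<m. (1/2::real) ^ (m - i)) = (\<Sum>i<m. (1/2) ^ Suc i)"
    using sum.nat_diff_reindex[of "\<lambda>i. (1/2::real) ^ (m - i)" m] by (simp add: Suc_diff_le)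
  also have "(\<Sum>i<m. (1/2::real) ^ Suc i) = 1 - (1/2) ^ m"
    by (induction m) (simp_all add: field_simps)
  finally have "norm (\<Sum>i<m. coeff q i * z ^ i) \<le> ?a * (1 - (1/2) ^ m)" .
  moreover have "?a * (1 - (1/2) ^ m) < ?a"
    using assms(1) \<open>norm z > 0\<close> by simp
  moreover have "norm (\<Sum>i<m. coeff q i * z ^ i) = ?a"
    by (metis top norm_minus_cancel norm_mult norm_power)
  ultimately show False by simp
qed

lemma norm_root_le_linear_if_coeffs_bounded:
  fixes q :: "complex poly"
  assumes "coeff q m \<noteq> 0" and "\<And>i. i > m \<Longrightarrow> coeff q i = 0" and "0 < a" and "a \<le> norm (coeff q m)"
    and "t \<ge> 0" and coeffs: "\<And>i. i < m \<Longrightarrow> norm (coeff q i) \<le> A * t ^ (m - i)"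
    and "poly q z = 0"
  shows "norm z \<le> 2 * (max 1 (A / a) * t)"
proof (rule norm_root_le_if_coeffs_bounded[OF assms(1,2) _ _ assms(7)])
  define L where "L = max 1 (A / a)"
  show "0 \<le> max 1 (A / a) * t" using assms(5) by simp
  fix i assume "i < m"
  have "A \<le> norm (coeff q m) * L"
    using assms(3,4) by (simp add: L_def field_simps max_def mult_left_mono order_trans[OF _ assms(4)])
  also have "\<dots> \<le> norm (coeff q m) * L ^ (m - i)"
    using \<open>i < m\<close> by (intro mult_left_mono) (auto simp: L_def intro: order_trans[OF _ power_increasing[of 1]])
  finally have "A * t ^ (m - i) \<le> norm (coeff q m) * L ^ (m - i) * t ^ (m - i)"
    using assms(5) by (simp add: mult_right_mono)
  then show "norm (coeff q i) \<le> norm (coeff q m) * (max 1 (A / a) * t) ^ (m - i)"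
    using coeffs[OF \<open>i < m\<close>] by (simp add: L_def power_mult_distrib mult_ac)
qed

lemma norm_sum_if_le:
  fixes c :: "nat \<Rightarrow> complex"
  assumes "\<And>k. k \<le> n \<Longrightarrow> P k \<Longrightarrow> norm w ^ e k \<le> norm w ^ d"
  shows "norm (\<Sum>k\<le>n. if P k then c k * w ^ e k else 0) \<le> (\<Sum>k\<le>n. norm (c k)) * norm w ^ d"
proof -
  have "norm (\<Sum>k\<le>n. if P k then c k * w ^ e k else 0) \<le> (\<Sum>k\<le>n. norm (if P k then c k * w ^ e k else 0))"
    by (rule norm_sum)
  also have "\<dots> \<le> (\<Sum>k\<le>n. norm (c k) * norm w ^ d)"
    using assms by (intro sum_mono) (auto simp: norm_mult norm_power mult_left_mono)
  finally show ?thesis by (simp add: sum_distrib_right)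
qed

section \<open>Polynomials in two variables\<close>

text \<open>A polynomial in two variables z, w is encoded as a polynomial in z whose coefficients are
  polynomials in w; \<open>eval_coeffs w P\<close> is then the specialisation P(-, w).\<close>

abbreviation eval_coeffs :: "'a::comm_semiring_1 \<Rightarrow> 'a poly poly \<Rightarrow> 'a poly" where
  "eval_coeffs w P \<equiv> map_poly (\<lambda>p. poly p w) P"

lemma eval_coeffs_sum: "eval_coeffs w (sum f S) = (\<Sum>x\<in>S. eval_coeffs w (f x :: 'a::comm_ring_1 poly poly))"
proof -
  interpret map_poly_comm_ring_hom "\<lambda>p. poly p w" ..
  show ?thesis by (rule hom_sum)
qed

lemma eval_coeffs_mult: "eval_coeffs w (P * Q) = eval_coeffs w P * eval_coeffs w (Q :: 'a::comm_ring_1 poly poly)"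
proof -
  interpret map_poly_comm_ring_hom "\<lambda>p. poly p w" ..
  show ?thesis by (rule hom_mult)
qed

lemma poly_eq_monom_term:
  fixes p :: "'a::comm_semiring_1 poly"
  assumes "\<And>j. coeff p j \<noteq> 0 \<Longrightarrow> j = e"
  shows "poly p w = coeff p e * w ^ e"
proof -
  have "p = monom (coeff p e) e"
    using assms by (intro poly_eqI) (auto simp: coeff_monom)
  then have "poly p w = poly (monom (coeff p e) e) w" by (rule arg_cong)
  then show ?thesis by (simp add: poly_monom)
qed

lemma poly_eval_coeffs_homogeneous:
  fixes P :: "'a::comm_ring_1 poly poly"
  assumes hom: "\<And>i j. coeff (coeff P i) j \<noteq> 0 \<Longrightarrow> i + j = d"
  shows "poly (eval_coeffs w P) (\<zeta> * w) = w ^ d * poly (eval_coeffs 1 P) \<zeta>"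
proof -
  have monomial_term: "poly (coeff P i) w * (\<zeta> * w) ^ i = w ^ d * (poly (coeff P i) 1 * \<zeta> ^ i)" for i
  proof (cases "i \<le> d")
    case True
    have coeff_i: "poly (coeff P i) x = coeff (coeff P i) (d - i) * x ^ (d - i)" for x
      using hom True by (intro poly_eq_monom_term) fastforce
    have "poly (coeff P i) w * (\<zeta> * w) ^ i = coeff (coeff P i) (d - i) * \<zeta> ^ i * (w ^ (d - i) * w ^ i)"
      by (simp add: coeff_i power_mult_distrib mult_ac)
    also have "w ^ (d - i) * w ^ i = w ^ d" using True by (simp flip: power_add)
    finally show ?thesis by (simp add: coeff_i mult_ac)
  next
    case False
    then have "coeff P i = 0" using hom by (intro poly_eqI) fastforce
    then show ?thesis by simp
  qed
  have "poly (eval_coeffs w P) (\<zeta> * w) = (\<Sum>i<Suc (degree P). poly (coeff P i) w * (\<zeta> * w) ^ i)"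
    by (subst poly_eq_sum_lessThan[of "Suc (degree P)"]) (auto simp: coeff_map_poly coeff_eq_0)
  also have "\<dots> = w ^ d * (\<Sum>i<Suc (degree P). poly (coeff P i) 1 * \<zeta> ^ i)"
    by (simp only: monomial_term sum_distrib_left)
  also have "(\<Sum>i<Suc (degree P). poly (coeff P i) 1 * \<zeta> ^ i) = poly (eval_coeffs 1 P) \<zeta>"
    by (subst poly_eq_sum_lessThan[of "Suc (degree P)"]) (auto simp: coeff_map_poly coeff_eq_0)
  finally show ?thesis .
qed

lemma homogeneous_if_roots_linearly_bounded:
  fixes P :: "complex poly poly"
  assumes "P \<noteq> 0" and "degree (lead_coeff P) = 0" and "\<delta> > 0" and "K \<ge> 0"
    and roots: "\<And>w z. norm w \<ge> 1 \<or> w \<noteq> 0 \<and> norm w \<le> \<delta> \<Longrightarrow>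
                  poly (eval_coeffs w P) z = 0 \<Longrightarrow> norm z \<le> K * norm w"
    and "coeff (coeff P i) j \<noteq> 0"
  shows "i + j = degree P"
proof -
  define d where "d = degree P"
  obtain c where c: "lead_coeff P = [:c:]" using assms(2) by (meson degree_eq_zeroE)
  have "c \<noteq> 0" using c assms(1) by auto
  have i: "i \<le> d" using assms(6) coeff_eq_0[of P i] by (force simp: d_def)
  have degree_eval: "degree (eval_coeffs w P) = d" for w
    using c \<open>c \<noteq> 0\<close> by (intro degree_eqI) (auto simp: coeff_map_poly d_def coeff_eq_0)
  have lead_eval: "lead_coeff (eval_coeffs w P) = c" for w
    using c by (simp add: degree_eval coeff_map_poly d_def)
  have "norm (poly (coeff P i) w) \<le> (norm c * real (d choose i) * K ^ (d - i)) * norm w ^ (d - i)"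
    if "norm w \<ge> 1 \<or> w \<noteq> 0 \<and> norm w \<le> \<delta>" for w
  proof -
    have "eval_coeffs w P \<noteq> 0" using lead_eval[of w] \<open>c \<noteq> 0\<close> by (metis leading_coeff_0_iff)
    then have "norm (coeff (eval_coeffs w P) i)
        \<le> norm (lead_coeff (eval_coeffs w P)) * real (degree (eval_coeffs w P) choose i)
            * (K * norm w) ^ (degree (eval_coeffs w P) - i)"
      using that assms(4) by (intro norm_coeff_le_if_roots_bounded roots) auto
    moreover have "poly (coeff P d) w = c" using c by (simp add: d_def)
    ultimately show ?thesis
      by (simp add: degree_eval coeff_map_poly power_mult_distrib mult_ac)
  qed
  then have "coeff (coeff P i) j = 0" if "j \<noteq> d - i"
    using assms(3) that by (intro coeff_eq_0_if_bounded_near_0_and_infinity) auto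
  then show ?thesis using assms(6) i by (force simp: d_def)
qed

lemma vanishes_on_line_if_roots_linearly_bounded:
  fixes P :: "complex poly poly"
  assumes "degree P \<noteq> 0" and "degree (lead_coeff P) = 0" and "\<delta> > 0" and "K \<ge> 0"
    and "\<And>w z. norm w \<ge> 1 \<or> w \<noteq> 0 \<and> norm w \<le> \<delta> \<Longrightarrow>
               poly (eval_coeffs w P) z = 0 \<Longrightarrow> norm z \<le> K * norm w"
  obtains \<zeta> where "\<And>w. poly (eval_coeffs w P) (\<zeta> * w) = 0"
proof -
  obtain c where c: "lead_coeff P = [:c:]" using assms(2) by (meson degree_eq_zeroE)
  have "P \<noteq> 0" using assms(1) by auto
  then have "c \<noteq> 0" using c by auto
  then have "degree (eval_coeffs 1 P) = degree P"
    using c by (intro degree_eqI) (auto simp: coeff_map_poly coeff_eq_0)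
  then obtain \<zeta> where \<zeta>: "poly (eval_coeffs 1 P) \<zeta> = 0"
    using assms(1) fundamental_theorem_of_algebra constant_degree by metis
  have "poly (eval_coeffs w P) (\<zeta> * w) = w ^ degree P * poly (eval_coeffs 1 P) \<zeta>" for w
    using homogeneous_if_roots_linearly_bounded[OF \<open>P \<noteq> 0\<close> assms(2-5)]
    by (intro poly_eval_coeffs_homogeneous) blast
  with \<zeta> show ?thesis by (intro that) simp
qed

section \<open>The divided difference\<close>

definition divided_diff :: "'a::comm_ring_1 poly \<Rightarrow> 'a \<Rightarrow> 'a \<Rightarrow> 'a" where
  "divided_diff h z w = (\<Sum>k\<le>degree h. coeff h k * (\<Sum>j<k. z ^ j * w ^ (k - 1 - j)))"

lemma divided_diff_mult_diff: "(z - w) * divided_diff h z w = poly h z - poly h w"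
proof -
  have "poly h z - poly h w = (\<Sum>k\<le>degree h. coeff h k * (z ^ k - w ^ k))"
    by (simp add: poly_altdef sum_subtractf right_diff_distrib)
  also have "\<dots> = (\<Sum>k\<le>degree h. coeff h k * ((z - w) * (\<Sum>j<k. w ^ (k - Suc j) * z ^ j)))"
    by (simp add: power_diff_sumr2)
  also have "\<dots> = (z - w) * divided_diff h z w"
    unfolding divided_diff_def by (simp add: sum_distrib_left mult_ac)
  finally show ?thesis by simp
qed

lemma continuous_on_divided_diff [continuous_intros]:
  fixes f g :: "'b::topological_space \<Rightarrow> 'a::real_normed_field"
  assumes "continuous_on S f" and "continuous_on S g"
  shows "continuous_on S (\<lambda>x. divided_diff h (f x) (g x))"
  unfolding divided_diff_def by (intro continuous_intros assms)

lemma divided_diff_diag: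
  fixes h :: "'a::real_normed_field poly"
  shows "divided_diff h w w = poly (pderiv h) w"
proof -
  have "isCont (\<lambda>z. divided_diff h z w) w"
    unfolding divided_diff_def by (intro continuous_intros)
  then have "(poly h has_field_derivative divided_diff h w w) (at w)"
    unfolding CARAT_DERIV
    by (intro exI[of _ "\<lambda>z. divided_diff h z w"]) (simp add: divided_diff_mult_diff[symmetric] mult.commute)
  then show ?thesis using poly_DERIV by (rule DERIV_unique)
qed

lemma diff_quot_eq_divided_diff: "diff_quot h z w = divided_diff h z w"
proof (cases "z = w")
  case True
  then show ?thesis by (simp add: diff_quot_def divided_diff_diag)
next
  case False
  then have "divided_diff h z w = (poly h z - poly h w) / (z - w)"
    using divided_diff_mult_diff[of z w h] by (simp add: field_simps)
  then show ?thesis using False by (simp add: diff_quot_def)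
qed

lemma pcompose_monom_if_degree_0:
  assumes "degree h = 0"
  shows "\<exists>m>1. \<exists>g. h = pcompose g (monom 1 m)"
proof -
  obtain a where "h = [:a:]" using assms by (rule degree_eq_zeroE)
  then have "h = pcompose h (monom 1 2)" by simp
  then show ?thesis by (intro exI[of _ 2]) auto
qed

lemma pcompose_monom_if_coeffs_dvd:
  fixes h :: "'a::comm_ring_1 poly"
  assumes "m > 0" and dvd: "\<And>k. coeff h k \<noteq> 0 \<Longrightarrow> m dvd k"
  shows "\<exists>g. h = pcompose g (monom 1 m)"
proof
  define g where "g = Poly (map (\<lambda>j. coeff h (m * j)) [0..<Suc (degree h)])"
  have coeff_g: "coeff g j = coeff h (m * j)" for j
  proof (cases "j < Suc (degree h)")
    case True
    then show ?thesis by (simp add: g_def nth_default_def del: upt_Suc)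
  next
    case False
    moreover have "j \<le> m * j" using assms(1) by simp
    ultimately have "degree h < m * j" by linarith
    then show ?thesis using False by (simp add: g_def nth_default_def coeff_eq_0 del: upt_Suc)
  qed
  show "h = pcompose g (monom 1 m)"
  proof (rule poly_eqI)
    fix t
    have "coeff (pcompose g (monom 1 m)) (m * (t div m) + t mod m)
          = (if t mod m = 0 then coeff g (t div m) else 0)"
      using assms(1) by (intro coeff_pcompose_monom) simp
    then show "coeff h t = coeff (pcompose g (monom 1 m)) t"
      using dvd[of t] by (cases "coeff h t = 0") (auto simp: coeff_g dvd_eq_mod_eq_0)
  qed
qed

lemma pcompose_monom_if_rotation_invariant:
  fixes h :: "'a::{idom,ring_char_0} poly"
  assumes "\<zeta> \<noteq> 1" and invariant: "\<And>w. poly h (\<zeta> * w) = poly h w"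
  shows "\<exists>m>1. \<exists>g. h = pcompose g (monom 1 m)"
proof (cases "degree h = 0")
  case True
  then show ?thesis by (rule pcompose_monom_if_degree_0)
next
  case False
  have "pcompose h [:0, \<zeta>:] = h"
    using invariant by (intro poly_eq_poly_eq_iff[THEN iffD1] ext) (simp add: poly_pcompose mult.commute)
  then have rot: "\<zeta> ^ k * coeff h k = coeff h k" for k
    using coeff_pcompose_linear[of h \<zeta> k] by simp
  have "lead_coeff h \<noteq> 0" using False by auto
  then have "\<zeta> ^ degree h = 1" using rot[of "degree h"] by simp
  define m where "m = (LEAST m. 0 < m \<and> \<zeta> ^ m = 1)"
  have m: "0 < m" "\<zeta> ^ m = 1"
    using LeastI[of "\<lambda>m. 0 < m \<and> \<zeta> ^ m = 1" "degree h"] False \<open>\<zeta> ^ degree h = 1\<close> by (auto simp: m_def)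
  have "m > 1" using m assms(1) by (cases "m = 1") auto
  have dvd: "m dvd k" if "coeff h k \<noteq> 0" for k
  proof (rule ccontr)
    assume "\<not> m dvd k"
    then have "0 < k mod m" by (simp add: mod_greater_zero_iff_not_dvd)
    have "\<zeta> ^ k = 1" using rot[of k] that by simp
    moreover have "\<zeta> ^ k = (\<zeta> ^ m) ^ (k div m) * \<zeta> ^ (k mod m)"
      by (simp add: power_mult[symmetric] power_add[symmetric])
    ultimately have "\<zeta> ^ (k mod m) = 1" using m by simp
    moreover have "k mod m < m" using m by simp
    ultimately show False using \<open>0 < k mod m\<close> not_less_Least[of "k mod m" "\<lambda>m. 0 < m \<and> \<zeta> ^ m = 1"]
      unfolding m_def by auto
  qed
  then show ?thesis using \<open>m > 1\<close> pcompose_monom_if_coeffs_dvd[OF m(1), of h] by blast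
qed

lemma pcompose_monom_if_divided_diff_vanishes_on_line:
  fixes h :: "complex poly"
  assumes "\<And>w. divided_diff h (\<zeta> * w) w = 0"
  shows "\<exists>m>1. \<exists>g. h = pcompose g (monom 1 m)"
proof (cases "\<zeta> = 1")
  case True
  then have "poly (pderiv h) w = 0" for w using assms[of w] divided_diff_diag[of h w] by simp
  then have "pderiv h = 0" using poly_all_0_iff_0 by auto
  then have "degree h = 0" by (simp add: pderiv_eq_0_iff)
  then show ?thesis by (rule pcompose_monom_if_degree_0)
next
  case False
  have "poly h (\<zeta> * w) = poly h w" for w
    using divided_diff_mult_diff[of "\<zeta> * w" w h] assms[of w] by simp
  then show ?thesis by (rule pcompose_monom_if_rotation_invariant[OF False])
qed

section \<open>Finiteness of the twins on the unit circle\<close>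

definition divided_diff_poly :: "'a::comm_ring_1 poly \<Rightarrow> 'a poly poly" where
  "divided_diff_poly h = (\<Sum>k\<le>degree h. \<Sum>j<k. monom (monom (coeff h k) (k - 1 - j)) j)"

lemma poly_eval_divided_diff_poly: "poly (eval_coeffs w (divided_diff_poly h)) z = divided_diff h z w"
  by (simp add: divided_diff_poly_def divided_diff_def eval_coeffs_sum map_poly_monom poly_monom
      poly_sum sum_distrib_left mult_ac)

lemma coeff_divided_diff_poly:
  "coeff (divided_diff_poly h) i = (\<Sum>k\<le>degree h. if i < k then monom (coeff h k) (k - 1 - i) else 0)"
  by (simp add: divided_diff_poly_def coeff_sum coeff_monom sum.delta' if_distrib cong: if_cong)

lemma poly_coeff_divided_diff_poly:
  "poly (coeff (divided_diff_poly h) i) w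
     = (\<Sum>k\<le>degree h. if i < k then coeff h k * w ^ (k - 1 - i) else 0)"
  unfolding coeff_divided_diff_poly poly_sum by (intro sum.cong) (auto simp: poly_monom)

lemma
  assumes "degree h \<noteq> 0"
  shows degree_divided_diff_poly: "degree (divided_diff_poly h) = degree h - 1"
    and lead_coeff_divided_diff_poly: "lead_coeff (divided_diff_poly h) = [:lead_coeff h:]"
    and degree_eval_divided_diff_poly: "degree (eval_coeffs w (divided_diff_poly h)) = degree h - 1"
    and lead_coeff_eval_divided_diff_poly: "lead_coeff (eval_coeffs w (divided_diff_poly h)) = lead_coeff h"
proof -
  have "coeff (divided_diff_poly h) (degree h - 1)
      = (\<Sum>k\<le>degree h. if k = degree h then monom (coeff h k) 0 else 0)"
    unfolding coeff_divided_diff_poly using assms by (intro sum.cong refl) auto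
  then have top: "coeff (divided_diff_poly h) (degree h - 1) = [:lead_coeff h:]" by (simp add: monom_0)
  have high: "coeff (divided_diff_poly h) i = 0" if "i > degree h - 1" for i
    using that by (auto simp: coeff_divided_diff_poly intro!: sum.neutral)
  have "lead_coeff h \<noteq> 0" using assms by auto
  show "degree (divided_diff_poly h) = degree h - 1"
    using top high \<open>lead_coeff h \<noteq> 0\<close> by (intro degree_eqI) auto
  then show "lead_coeff (divided_diff_poly h) = [:lead_coeff h:]" using top by simp
  show deg: "degree (eval_coeffs w (divided_diff_poly h)) = degree h - 1"
    using top high \<open>lead_coeff h \<noteq> 0\<close> by (intro degree_eqI) (auto simp: coeff_map_poly)
  show "lead_coeff (eval_coeffs w (divided_diff_poly h)) = lead_coeff h"
    using top by (simp add: deg coeff_map_poly)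
qed

lemma roots_divided_diff_linearly_bounded:
  fixes h :: "complex poly"
  assumes "degree h \<noteq> 0"
  obtains K where "K \<ge> 0" and "\<And>z w. norm w \<ge> 1 \<Longrightarrow> divided_diff h z w = 0 \<Longrightarrow> norm z \<le> K * norm w"
proof
  define A where "A = (\<Sum>k\<le>degree h. norm (coeff h k))"
  define K where "K = 2 * max 1 (A / norm (lead_coeff h))"
  show "K \<ge> 0" by (simp add: K_def)
  fix z w :: complex assume w: "norm w \<ge> 1" and "divided_diff h z w = 0"
  let ?q = "eval_coeffs w (divided_diff_poly h)"
  have "norm z \<le> 2 * (max 1 (A / norm (lead_coeff h)) * norm w)"
  proof (rule norm_root_le_linear_if_coeffs_bounded)
    show "coeff ?q (degree h - 1) \<noteq> 0" "0 < norm (lead_coeff h)"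
      using lead_coeff_eval_divided_diff_poly[OF assms] degree_eval_divided_diff_poly[OF assms] assms
      by auto
    show "coeff ?q i = 0" if "i > degree h - 1" for i
      using that degree_eval_divided_diff_poly[OF assms] by (intro coeff_eq_0) simp
    show "norm (lead_coeff h) \<le> norm (coeff ?q (degree h - 1))"
      using lead_coeff_eval_divided_diff_poly[OF assms] degree_eval_divided_diff_poly[OF assms] by simp
    show "poly ?q z = 0" by (simp add: poly_eval_divided_diff_poly \<open>divided_diff h z w = 0\<close>)
    show "norm (coeff ?q i) \<le> A * norm w ^ (degree h - 1 - i)" for i
      unfolding A_def coeff_map_poly[of "\<lambda>p. poly p w", OF poly_0] poly_coeff_divided_diff_poly
      using w by (intro norm_sum_if_le power_increasing) auto
  qed simp
  then show "norm z \<le> K * norm w" by (simp add: K_def)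
qed

definition reflected_divided_diff_poly :: "complex poly \<Rightarrow> complex poly poly" where
  "reflected_divided_diff_poly h =
     (\<Sum>k\<le>degree h. \<Sum>j<k. monom (monom (cnj (coeff h k)) (degree h - k + j)) (degree h - Suc j))"

lemma poly_eval_reflected_divided_diff_poly:
  assumes "norm z = 1" and "norm w = 1"
  shows "poly (eval_coeffs w (reflected_divided_diff_poly h)) z
           = (z * w) ^ (degree h - 1) * cnj (divided_diff h z w)"
proof -
  let ?n = "degree h"
  have unimodular: "x ^ a * cnj x ^ a = 1" if "norm x = 1" for x :: complex and a
  proof -
    have "x * cnj x = 1" using that by (simp add: complex_mult_cnj cmod_def power2_eq_square)
    then show ?thesis by (simp flip: power_mult_distrib)
  qed
  have "w ^ (?n - k + j) * z ^ (?n - Suc j) = (z * w) ^ (?n - 1) * (cnj z ^ j * cnj w ^ (k - 1 - j))"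
    if "k \<le> ?n" "j < k" for k j
  proof -
    have "z ^ (?n - 1) = z ^ (?n - Suc j) * z ^ j" "w ^ (?n - 1) = w ^ (?n - k + j) * w ^ (k - 1 - j)"
      using that by (simp_all flip: power_add)
    then have "(z * w) ^ (?n - 1) * (cnj z ^ j * cnj w ^ (k - 1 - j))
        = (w ^ (?n - k + j) * z ^ (?n - Suc j)) * (z ^ j * cnj z ^ j) * (w ^ (k - 1 - j) * cnj w ^ (k - 1 - j))"
      by (simp add: power_mult_distrib mult_ac)
    then show ?thesis using unimodular assms by simp
  qed
  then show ?thesis
    by (simp add: reflected_divided_diff_poly_def divided_diff_def eval_coeffs_sum map_poly_monom
        poly_monom poly_sum sum_distrib_left mult_ac)
qed

lemma coeff_reflected_divided_diff_poly:
  "coeff (reflected_divided_diff_poly h) i =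
     (if i < degree h then
        (\<Sum>k\<le>degree h. if degree h - Suc i < k
                          then monom (cnj (coeff h k)) (degree h - k + (degree h - Suc i)) else 0)
      else 0)"
proof -
  have "coeff (reflected_divided_diff_poly h) i =
    (\<Sum>k\<le>degree h. \<Sum>j<k. if j = degree h - Suc i \<and> i < degree h
        then monom (cnj (coeff h k)) (degree h - k + j) else 0)"
    unfolding reflected_divided_diff_poly_def coeff_sum coeff_monom
    by (intro sum.cong refl) auto
  then show ?thesis by (simp add: sum.delta' if_distrib cong: if_cong)
qed

lemma poly_coeff_reflected_divided_diff_poly:
  assumes "i < degree h"
  shows "poly (coeff (reflected_divided_diff_poly h) i) w
     = (\<Sum>k\<le>degree h. if degree h - Suc i < k
                        then cnj (coeff h k) * w ^ (degree h - k + (degree h - Suc i)) else 0)"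
proof -
  have "coeff (reflected_divided_diff_poly h) i
     = (\<Sum>k\<le>degree h. if degree h - Suc i < k
                        then monom (cnj (coeff h k)) (degree h - k + (degree h - Suc i)) else 0)"
    using assms by (simp add: coeff_reflected_divided_diff_poly)
  then show ?thesis by (auto simp: poly_sum poly_monom intro!: sum.cong)
qed

lemma poly_top_coeff_reflected_divided_diff_poly:
  assumes "degree h \<noteq> 0"
  shows "poly (coeff (reflected_divided_diff_poly h) (degree h - 1)) w - cnj (lead_coeff h)
     = (\<Sum>k\<le>degree h. if 0 < k \<and> k < degree h then cnj (coeff h k) * w ^ (degree h - k) else 0)"
proof -
  let ?X = "\<lambda>k. cnj (coeff h k) * w ^ (degree h - k)"
  have "poly (coeff (reflected_divided_diff_poly h) (degree h - 1)) w
      = (\<Sum>k\<le>degree h. if 0 < k then ?X k else 0)"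
  proof -
    have e: "degree h - Suc (degree h - 1) = 0" using assms by simp
    have i: "degree h - 1 < degree h" using assms by simp
    show ?thesis unfolding poly_coeff_reflected_divided_diff_poly[OF i] e add_0_right ..
  qed
  also have "\<dots> = (\<Sum>k\<le>degree h. (if 0 < k \<and> k < degree h then ?X k else 0)
                                  + (if k = degree h then ?X k else 0))"
    using assms by (intro sum.cong) auto
  also have "\<dots> = (\<Sum>k\<le>degree h. if 0 < k \<and> k < degree h then ?X k else 0) + cnj (lead_coeff h)"
    by (simp add: sum.distrib)
  finally show ?thesis by simp
qed

lemma
  assumes "degree h \<noteq> 0"
  shows top_coeff_reflected_divided_diff_poly_nonzero:
      "coeff (reflected_divided_diff_poly h) (degree h - 1) \<noteq> 0"
    and degree_reflected_divided_diff_poly: "degree (reflected_divided_diff_poly h) = degree h - 1"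
    and degree_eval_reflected_divided_diff_poly:
      "poly (coeff (reflected_divided_diff_poly h) (degree h - 1)) w \<noteq> 0 \<Longrightarrow>
         degree (eval_coeffs w (reflected_divided_diff_poly h)) = degree h - 1"
proof -
  have "lead_coeff h \<noteq> 0" using assms by auto
  moreover have "poly (coeff (reflected_divided_diff_poly h) (degree h - 1)) 0 = cnj (lead_coeff h)"
    using poly_top_coeff_reflected_divided_diff_poly[OF assms, of 0] by (simp add: sum.neutral)
  ultimately have "poly (coeff (reflected_divided_diff_poly h) (degree h - 1)) 0 \<noteq> 0" by simp
  then show top: "coeff (reflected_divided_diff_poly h) (degree h - 1) \<noteq> 0" by auto
  have high: "coeff (reflected_divided_diff_poly h) i = 0" if "i > degree h - 1" for i
    using that by (simp add: coeff_reflected_divided_diff_poly)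
  show "degree (reflected_divided_diff_poly h) = degree h - 1"
    using top high by (rule degree_eqI)
  show "degree (eval_coeffs w (reflected_divided_diff_poly h)) = degree h - 1"
    if "poly (coeff (reflected_divided_diff_poly h) (degree h - 1)) w \<noteq> 0"
    using that high by (intro degree_eqI) (auto simp: coeff_map_poly)
qed

lemma top_coeff_reflected_divided_diff_poly_near_0:
  fixes h :: "complex poly"
  assumes "degree h \<noteq> 0"
  obtains \<delta> where "\<delta> > 0" and "\<delta> \<le> 1"
    and "\<And>w. norm w \<le> \<delta> \<Longrightarrow>
           norm (lead_coeff h) / 2 \<le> norm (poly (coeff (reflected_divided_diff_poly h) (degree h - 1)) w)"
proof
  let ?n = "degree h"
  define A where "A = (\<Sum>k\<le>?n. norm (coeff h k))"
  define \<delta> where "\<delta> = min 1 (norm (lead_coeff h) / (2 * A))"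
  have lead_pos: "norm (lead_coeff h) > 0" using assms by auto
  moreover have "norm (lead_coeff h) \<le> A" unfolding A_def by (rule member_le_sum) auto
  ultimately have "A > 0" by linarith
  then show "\<delta> > 0" using lead_pos by (simp add: \<delta>_def del: zero_less_norm_iff)
  show "\<delta> \<le> 1" by (simp add: \<delta>_def)
  have "A * \<delta> \<le> norm (lead_coeff h) / 2"
    using \<open>A > 0\<close> by (auto simp: \<delta>_def min_def field_simps)
  fix w :: complex assume w: "norm w \<le> \<delta>"
  then have "norm w \<le> 1" by (simp add: \<delta>_def)
  let ?t = "poly (coeff (reflected_divided_diff_poly h) (?n - 1)) w"
  have "norm (\<Sum>k\<le>?n. if 0 < k \<and> k < ?n then cnj (coeff h k) * w ^ (?n - k) else 0)
      \<le> (\<Sum>k\<le>?n. norm (cnj (coeff h k))) * norm w ^ 1"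
    using \<open>norm w \<le> 1\<close> by (intro norm_sum_if_le power_decreasing) auto
  then have "norm (?t - cnj (lead_coeff h)) \<le> A * norm w"
    unfolding poly_top_coeff_reflected_divided_diff_poly[OF assms] A_def by simp
  also have "\<dots> \<le> A * \<delta>" using w \<open>A > 0\<close> by simp
  finally show "norm (lead_coeff h) / 2 \<le> norm ?t"
    using \<open>A * \<delta> \<le> _\<close> norm_triangle_ineq2[of "cnj (lead_coeff h)" ?t] by (simp add: norm_minus_commute)
qed

lemma roots_reflected_divided_diff_linearly_bounded:
  fixes h :: "complex poly"
  assumes "degree h \<noteq> 0"
  obtains \<delta> K where "\<delta> > 0" and "K \<ge> 0"
    and "\<And>z w. norm w \<le> \<delta> \<Longrightarrow> poly (eval_coeffs w (reflected_divided_diff_poly h)) z = 0 \<Longrightarrow>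
           norm z \<le> K * norm w"
proof -
  let ?G = "reflected_divided_diff_poly h" and ?n = "degree h"
  define A where "A = (\<Sum>k\<le>?n. norm (coeff h k))"
  define a where "a = norm (lead_coeff h) / 2"
  obtain \<delta> where "\<delta> > 0" "\<delta> \<le> 1" and top: "\<And>w. norm w \<le> \<delta> \<Longrightarrow> a \<le> norm (poly (coeff ?G (?n - 1)) w)"
    using top_coeff_reflected_divided_diff_poly_near_0[OF assms] unfolding a_def by blast
  have "a > 0" using assms by (auto simp: a_def)
  have "norm z \<le> 2 * (max 1 (A / a) * norm w)"
    if w: "norm w \<le> \<delta>" and z: "poly (eval_coeffs w ?G) z = 0" for z w
  proof (rule norm_root_le_linear_if_coeffs_bounded[OF _ _ \<open>a > 0\<close> _ _ _ z])
    show "a \<le> norm (coeff (eval_coeffs w ?G) (?n - 1))"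
      using top[OF w] by (simp add: coeff_map_poly)
    then show "coeff (eval_coeffs w ?G) (?n - 1) \<noteq> 0" using \<open>a > 0\<close> by auto
    show "coeff (eval_coeffs w ?G) i = 0" if "i > ?n - 1" for i
      using that by (simp add: coeff_map_poly coeff_reflected_divided_diff_poly)
    show "norm (coeff (eval_coeffs w ?G) i) \<le> A * norm w ^ (?n - 1 - i)" if "i < ?n - 1" for i
    proof -
      have "norm (\<Sum>k\<le>?n. if ?n - Suc i < k then cnj (coeff h k) * w ^ (?n - k + (?n - Suc i)) else 0)
          \<le> (\<Sum>k\<le>?n. norm (cnj (coeff h k))) * norm w ^ (?n - Suc i)"
        using w \<open>\<delta> \<le> 1\<close> by (intro norm_sum_if_le power_decreasing) auto
      moreover have "i < ?n" using that by simp
      ultimately show ?thesis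
        by (simp add: coeff_map_poly poly_coeff_reflected_divided_diff_poly A_def)
    qed
  qed simp
  then show ?thesis
    using \<open>\<delta> > 0\<close> by (intro that[of \<delta> "2 * max 1 (A / a)"]) (auto simp: mult.assoc)
qed

lemma resultant_eq_0_if_common_root:
  fixes f g :: "'a::{field,factorial_ring_gcd,semiring_gcd_mult_normalize} poly"
  assumes "f \<noteq> 0" and "poly f z = 0" and "poly g z = 0"
  shows "resultant f g = 0"
proof -
  have "[:-z, 1:] dvd gcd f g" using assms(2,3) by (simp add: poly_eq_0_iff_dvd)
  moreover have "gcd f g \<noteq> 0" using assms(1) by simp
  ultimately have "degree [:-z, 1:] \<le> degree (gcd f g)" by (rule dvd_imp_degree_le)
  then show ?thesis by (simp add: resultant_0_gcd)
qed

lemma resultant_divided_diff_polys_eq_0: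
  fixes h :: "complex poly"
  assumes "degree h \<noteq> 0"
    and "infinite {w \<in> sphere 0 1. \<exists>z \<in> sphere 0 1. z \<noteq> w \<and> poly h z = poly h w}" (is "infinite ?T")
  shows "resultant (divided_diff_poly h) (reflected_divided_diff_poly h) = 0"
proof (rule ccontr)
  let ?F = "divided_diff_poly h" and ?G = "reflected_divided_diff_poly h"
  let ?g = "coeff ?G (degree h - 1)"
  assume R: "resultant ?F ?G \<noteq> 0"
  have "poly (resultant ?F ?G) w = 0" if twin: "w \<in> ?T" and g: "poly ?g w \<noteq> 0" for w
  proof -
    obtain z where "z \<in> sphere 0 1" "w \<in> sphere 0 1" and z: "z \<noteq> w" "poly h z = poly h w"
      using twin by blast
    then have "norm z = 1" "norm w = 1" by simp_all
    have "divided_diff h z w = 0" using divided_diff_mult_diff[of z w h] z by simp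
    then have roots: "poly (eval_coeffs w ?F) z = 0" "poly (eval_coeffs w ?G) z = 0"
      by (simp_all add: poly_eval_divided_diff_poly poly_eval_reflected_divided_diff_poly[OF \<open>norm z = 1\<close> \<open>norm w = 1\<close>])
    have "lead_coeff h \<noteq> 0" using assms(1) by auto
    then have "lead_coeff (eval_coeffs w ?F) \<noteq> 0"
      by (simp only: lead_coeff_eval_divided_diff_poly[OF assms(1)] not_False_eq_True)
    then have "eval_coeffs w ?F \<noteq> 0" by (rule contrapos_nn) simp
    have "degree (eval_coeffs w ?F) = degree ?F" "degree (eval_coeffs w ?G) = degree ?G"
      using degree_eval_divided_diff_poly[OF assms(1)] degree_divided_diff_poly[OF assms(1)]
        degree_eval_reflected_divided_diff_poly[OF assms(1) g]
        degree_reflected_divided_diff_poly[OF assms(1)] by simp_all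
    then have "poly (resultant ?F ?G) w = resultant (eval_coeffs w ?F) (eval_coeffs w ?G)"
      by (rule poly_hom.resultant_map_poly[symmetric])
    also have "\<dots> = 0"
      using \<open>eval_coeffs w ?F \<noteq> 0\<close> roots by (rule resultant_eq_0_if_common_root)
    finally show ?thesis .
  qed
  then have "?T \<subseteq> {w. poly ?g w = 0} \<union> {w. poly (resultant ?F ?G) w = 0}" by blast
  moreover have "finite {w. poly ?g w = 0}"
    using top_coeff_reflected_divided_diff_poly_nonzero[OF assms(1)] by (rule poly_roots_finite)
  moreover have "finite {w. poly (resultant ?F ?G) w = 0}"
    using R by (rule poly_roots_finite)
  ultimately show False using assms(2) finite_subset by blast
qed

lemma divided_diff_vanishes_on_line_if_common_factor:
  fixes h :: "complex poly"
  assumes "degree h \<noteq> 0"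
    and "degree (gcd (divided_diff_poly h) (reflected_divided_diff_poly h)) \<noteq> 0"
  obtains \<zeta> where "\<And>w. divided_diff h (\<zeta> * w) w = 0"
proof -
  let ?F = "divided_diff_poly h" and ?G = "reflected_divided_diff_poly h"
  define P where "P = gcd ?F ?G"
  obtain Q where FQ: "?F = P * Q" unfolding P_def by (meson gcd_dvd1 dvdE)
  obtain Q' where GQ': "?G = P * Q'" unfolding P_def by (meson gcd_dvd2 dvdE)
  have "degree P \<noteq> 0" using assms(2) by (simp add: P_def)
  then have "P \<noteq> 0" "Q \<noteq> 0"
    using assms(1) FQ lead_coeff_divided_diff_poly[OF assms(1)] by auto
  then have "degree (lead_coeff P) + degree (lead_coeff Q) = degree (lead_coeff P * lead_coeff Q)"
    by (intro degree_mult_eq[symmetric]) auto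
  also have "lead_coeff P * lead_coeff Q = lead_coeff ?F" by (simp add: FQ lead_coeff_mult)
  finally have "degree (lead_coeff P) = 0"
    using lead_coeff_divided_diff_poly[OF assms(1)] by simp
  obtain K1 where "K1 \<ge> 0"
    and K1: "\<And>z w. norm w \<ge> 1 \<Longrightarrow> divided_diff h z w = 0 \<Longrightarrow> norm z \<le> K1 * norm w"
    using roots_divided_diff_linearly_bounded[OF assms(1)] by blast
  obtain \<delta> K2 where "\<delta> > 0" "K2 \<ge> 0"
    and K2: "\<And>z w. norm w \<le> \<delta> \<Longrightarrow> poly (eval_coeffs w ?G) z = 0 \<Longrightarrow> norm z \<le> K2 * norm w"
    using roots_reflected_divided_diff_linearly_bounded[OF assms(1)] by blast
  have P_root: "poly (eval_coeffs w ?F) z = 0" "poly (eval_coeffs w ?G) z = 0"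
    if "poly (eval_coeffs w P) z = 0" for w z
    using that by (simp_all add: FQ GQ' eval_coeffs_mult)
  have "norm z \<le> max K1 K2 * norm w"
    if "norm w \<ge> 1 \<or> w \<noteq> 0 \<and> norm w \<le> \<delta>" "poly (eval_coeffs w P) z = 0" for w z
  proof -
    have "norm z \<le> K1 * norm w \<or> norm z \<le> K2 * norm w"
      using that K1[of w z] K2[of w z] P_root[OF that(2)] by (auto simp: poly_eval_divided_diff_poly)
    moreover have "K1 * norm w \<le> max K1 K2 * norm w" "K2 * norm w \<le> max K1 K2 * norm w"
      by (simp_all add: mult_right_mono)
    ultimately show ?thesis by linarith
  qed
  moreover have "max K1 K2 \<ge> 0" using \<open>K1 \<ge> 0\<close> by simp
  ultimately obtain \<zeta> where "\<And>w. poly (eval_coeffs w P) (\<zeta> * w) = 0"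
    using vanishes_on_line_if_roots_linearly_bounded[OF \<open>degree P \<noteq> 0\<close> \<open>degree (lead_coeff P) = 0\<close>
        \<open>\<delta> > 0\<close>] by blast
  then have "divided_diff h (\<zeta> * w) w = 0" for w
    using P_root(1) by (simp add: poly_eval_divided_diff_poly)
  then show ?thesis by (rule that)
qed

lemma finite_twins_on_circle:
  fixes h :: "complex poly"
  assumes "\<not> (\<exists>m>1. \<exists>g. h = pcompose g (monom 1 m))"
  shows "finite {w \<in> sphere 0 1. \<exists>z \<in> sphere 0 1. z \<noteq> w \<and> poly h z = poly h w}"
proof (rule ccontr)
  assume infinite: "infinite {w \<in> sphere 0 1. \<exists>z \<in> sphere 0 1. z \<noteq> w \<and> poly h z = poly h w}"
  have "degree h \<noteq> 0" using assms pcompose_monom_if_degree_0 by blast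
  then have "degree (gcd (divided_diff_poly h) (reflected_divided_diff_poly h)) \<noteq> 0"
    using resultant_divided_diff_polys_eq_0[OF _ infinite] by (simp add: resultant_0_gcd)
  then obtain \<zeta> where "\<And>w. divided_diff h (\<zeta> * w) w = 0"
    using divided_diff_vanishes_on_line_if_common_factor[OF \<open>degree h \<noteq> 0\<close>] by blast
  then show False using assms pcompose_monom_if_divided_diff_vanishes_on_line by blast
qed

section \<open>Maxima of Re (c h) on the closed disc\<close>

lemma right_half_plane_power_positive:
  fixes B :: complex
  assumes "B \<noteq> 0" and "k \<ge> 2"
  obtains \<zeta> where "Re \<zeta> > 0" and "Re (B * \<zeta> ^ k) > 0"
proof
  define \<zeta> where "\<zeta> = cis (- 2 * Arg B / (3 * k))"
  have "\<bar>Arg B\<bar> \<le> pi" using Arg_bounded[of B] by auto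
  have "\<bar>2 * Arg B / (3 * k)\<bar> = 2 * \<bar>Arg B\<bar> / (3 * k)" by (simp add: abs_divide abs_mult)
  also have "\<dots> \<le> 2 * pi / (3 * 2)"
    using \<open>\<bar>Arg B\<bar> \<le> pi\<close> assms(2) by (intro frac_le) auto
  finally have bound: "\<bar>2 * Arg B / (3 * k)\<bar> \<le> pi / 3" by simp
  have "cos (2 * Arg B / (3 * k)) > 0"
    using abs_le_D1[OF bound] abs_le_D2[OF bound] pi_gt_zero by (intro cos_gt_zero_pi) linarith+
  then show "Re \<zeta> > 0" by (simp add: \<zeta>_def)
  have "real k * (- 2 * Arg B / (3 * k)) = - 2 * Arg B / 3" using assms(2) by simp
  then have "\<zeta> ^ k = cis (- 2 * Arg B / 3)" unfolding \<zeta>_def Complex.DeMoivre by (simp only:)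
  then have "B * \<zeta> ^ k = of_real (norm B) * (cis (Arg B) * cis (- 2 * Arg B / 3))"
    using rcis_cmod_Arg[of B] by (simp add: rcis_def mult.assoc)
  also have "cis (Arg B) * cis (- 2 * Arg B / 3) = cis (Arg B / 3)" by (simp add: cis_mult)
  finally have "B * \<zeta> ^ k = of_real (norm B) * cis (Arg B / 3)" .
  moreover have "cos (Arg B / 3) > 0"
    using abs_le_D1[OF \<open>\<bar>Arg B\<bar> \<le> pi\<close>] abs_le_D2[OF \<open>\<bar>Arg B\<bar> \<le> pi\<close>] pi_gt_zero
    by (intro cos_gt_zero_pi) linarith+
  ultimately show "Re (B * \<zeta> ^ k) > 0" using assms(1) by simp
qed

lemma nonpos_on_right_half_plane:
  fixes B :: complex
  assumes "B \<noteq> 0" and "k \<ge> 1" and nonpos: "\<And>\<zeta>. Re \<zeta> > 0 \<Longrightarrow> Re (B * \<zeta> ^ k) \<le> 0"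
  shows "k = 1" and "Im B = 0" and "Re B < 0"
proof -
  show "k = 1"
  proof (rule ccontr)
    assume "k \<noteq> 1"
    then have "k \<ge> 2" using assms(2) by simp
    then obtain \<zeta> where "Re \<zeta> > 0" "Re (B * \<zeta> ^ k) > 0"
      by (rule right_half_plane_power_positive[OF assms(1)])
    with nonpos show False by (meson not_le)
  qed
  have line: "Re B - s * Im B \<le> 0" for s
    using nonpos[of "1 + \<i> * of_real s"] \<open>k = 1\<close> by (simp add: mult.commute)
  show "Im B = 0"
  proof (rule ccontr)
    assume "Im B \<noteq> 0"
    then show False using line[of "(Re B - 1) / Im B"] by simp
  qed
  moreover have "Re B \<le> 0" using line[of 0] by simp
  ultimately show "Re B < 0" using assms(1) complex_eq_iff[of B 0] by auto
qed

lemma poly_shift_factor: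
  fixes h :: "complex poly"
  assumes "degree h \<noteq> 0"
  obtains k q where "k \<ge> 1" and "poly q 0 \<noteq> 0" and "\<And>t. poly h (w + t) - poly h w = t ^ k * poly q t"
    and "k = 1 \<Longrightarrow> poly q 0 = poly (pderiv h) w"
proof -
  define p where "p = pcompose h [:w, 1:] - [:poly h w:]"
  have p: "poly p t = poly h (w + t) - poly h w" for t by (simp add: p_def poly_pcompose)
  have "p \<noteq> 0"
  proof
    assume "p = 0"
    then have "degree (pcompose h [:w, 1:]) = 0" by (simp add: p_def)
    then show False using assms by (simp add: degree_pcompose)
  qed
  obtain q where pq: "p = [:0, 1:] ^ order 0 p * q" and "\<not> [:0, 1:] dvd q"
    using order_decomp[OF \<open>p \<noteq> 0\<close>, of 0] by auto
  have "poly q 0 \<noteq> 0" using \<open>\<not> [:0, 1:] dvd q\<close> poly_eq_0_iff_dvd[of q 0] by simp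
  have "order 0 p \<ge> 1" using order_root[of p 0] \<open>p \<noteq> 0\<close> p by simp
  have factor: "poly h (w + t) - poly h w = t ^ order 0 p * poly q t" for t
    by (subst p[symmetric], subst pq) simp
  have "poly q 0 = poly (pderiv h) w" if "order 0 p = 1"
  proof -
    have "((\<lambda>t. poly h (w + t) - poly h w) has_field_derivative poly q 0) (at 0)"
      unfolding CARAT_DERIV factor that
      by (intro exI[of _ "poly q"]) (auto intro: continuous_intros simp: mult.commute)
    moreover have "((\<lambda>t. poly h (w + t) - poly h w) has_field_derivative poly (pderiv h) w) (at 0)"
      using DERIV_shift[of "poly h" "poly (pderiv h) w" 0 w] poly_DERIV[of h w]
      by (auto intro!: derivative_eq_intros simp: add.commute)
    ultimately show ?thesis by (rule DERIV_unique)
  qed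
  then show ?thesis using that \<open>order 0 p \<ge> 1\<close> \<open>poly q 0 \<noteq> 0\<close> factor by blast
qed

lemma Re_leading_term_nonpos:
  fixes f :: "complex \<Rightarrow> complex" and q :: "complex poly"
  assumes factor: "\<And>t. f t = t ^ k * poly q t"
    and nonpos: "eventually (\<lambda>r. Re (c * f (of_real r * u)) \<le> 0) (at_right 0)"
  shows "Re (c * u ^ k * poly q 0) \<le> 0"
proof -
  have "((\<lambda>r. Re (c * u ^ k * poly q (of_real r * u))) \<longlongrightarrow> Re (c * u ^ k * poly q (of_real 0 * u)))
          (at_right 0)"
    by (intro tendsto_intros isCont_tendsto_compose[of _ "poly q"]) (auto intro: continuous_intros)
  moreover have "eventually (\<lambda>r. Re (c * u ^ k * poly q (of_real r * u)) \<le> 0) (at_right 0)"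
    using nonpos eventually_at_right_less[of 0]
  proof eventually_elim
    case (elim r)
    have "c * f (of_real r * u) = of_real (r ^ k) * (c * u ^ k * poly q (of_real r * u))"
      by (simp add: factor power_mult_distrib mult_ac)
    then have "Re (c * f (of_real r * u)) = Re (of_real (r ^ k) * (c * u ^ k * poly q (of_real r * u)))"
      by (rule arg_cong)
    also have "\<dots> = r ^ k * Re (c * u ^ k * poly q (of_real r * u))" by simp
    finally have "Re (c * f (of_real r * u)) = r ^ k * Re (c * u ^ k * poly q (of_real r * u))" .
    moreover have "r ^ k > 0" using elim(2) by simp
    ultimately show ?case using elim(1) by (metis mult_le_0_iff not_less)
  qed
  ultimately have "Re (c * u ^ k * poly q (of_real 0 * u)) \<le> 0"
    by (rule tendsto_upperbound) simp
  then show ?thesis by simp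
qed

lemma eventually_norm_le_1_inward:
  fixes w \<zeta> :: complex
  assumes "norm w \<le> 1" and "Re \<zeta> > 0"
  shows "eventually (\<lambda>r. norm (w + of_real r * (- w * \<zeta>)) \<le> 1) (at_right 0)"
proof -
  have "((\<lambda>r. r * norm \<zeta> ^ 2) \<longlongrightarrow> 0 * norm \<zeta> ^ 2) (at_right 0)" by (intro tendsto_intros)
  then have "eventually (\<lambda>r. r * norm \<zeta> ^ 2 < 2 * Re \<zeta>) (at_right 0)"
    using assms(2) by (intro order_tendstoD) auto
  then show ?thesis using eventually_at_right_less[of 0]
  proof eventually_elim
    case (elim r)
    have "norm (1 - of_real r * \<zeta>) ^ 2 = 1 - r * (2 * Re \<zeta> - r * norm \<zeta> ^ 2)"
      unfolding cmod_power2 by (simp add: power2_eq_square algebra_simps)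
    also have "\<dots> \<le> 1" using elim by (simp add: mult_nonneg_nonneg)
    finally have "norm (1 - of_real r * \<zeta>) \<le> 1" by (simp add: power_le_one_iff)
    then have "norm w * norm (1 - of_real r * \<zeta>) \<le> 1"
      using assms(1) by (simp add: mult_le_one)
    moreover have "w + of_real r * (- w * \<zeta>) = w * (1 - of_real r * \<zeta>)" by (simp add: algebra_simps)
    ultimately show ?case by (simp add: norm_mult)
  qed
qed

lemma eventually_norm_le_1_interior:
  fixes w u :: complex
  assumes "norm w < 1"
  shows "eventually (\<lambda>r. norm (w + of_real r * u) \<le> 1) (at_right 0)"
proof -
  have "((\<lambda>r. w + of_real r * u) \<longlongrightarrow> w + of_real 0 * u) (at_right 0)" by (intro tendsto_intros)
  then have "eventually (\<lambda>r. w + of_real r * u \<in> ball 0 1) (at_right 0)"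
    using assms by (intro topological_tendstoD) auto
  then show ?thesis by eventually_elim simp
qed

lemma Re_leading_term_nonpos_at_max:
  fixes h q :: "complex poly"
  assumes factor: "\<And>t. poly h (w + t) - poly h w = t ^ k * poly q t"
    and is_max: "\<And>z. norm z \<le> 1 \<Longrightarrow> Re (c * poly h z) \<le> Re (c * poly h w)"
    and "eventually (\<lambda>r. norm (w + of_real r * u) \<le> 1) (at_right 0)"
  shows "Re (c * u ^ k * poly q 0) \<le> 0"
  using factor
proof (rule Re_leading_term_nonpos)
  show "eventually (\<lambda>r. Re (c * (poly h (w + of_real r * u) - poly h w)) \<le> 0) (at_right 0)"
    using assms(3)
  proof eventually_elim
    case (elim r)
    then have "Re (c * poly h (w + of_real r * u)) \<le> Re (c * poly h w)" by (rule is_max)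
    then show ?case by (simp only: right_diff_distrib minus_complex.sel)
  qed
qed

lemma max_Re_on_cball_at_boundary:
  fixes h :: "complex poly"
  assumes "degree h \<noteq> 0" and "c \<noteq> 0" and "norm w \<le> 1"
    and is_max: "\<And>z. norm z \<le> 1 \<Longrightarrow> Re (c * poly h z) \<le> Re (c * poly h w)"
  shows "norm w = 1" and "Im (c * w * poly (pderiv h) w) = 0" and "Re (c * w * poly (pderiv h) w) > 0"
proof -
  obtain k q where "k \<ge> 1" "poly q 0 \<noteq> 0" and factor: "\<And>t. poly h (w + t) - poly h w = t ^ k * poly q t"
    and deriv: "k = 1 \<Longrightarrow> poly q 0 = poly (pderiv h) w"
    using poly_shift_factor[OF assms(1)] by metis
  have key: "Re (c * u ^ k * poly q 0) \<le> 0"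
    if "eventually (\<lambda>r. norm (w + of_real r * u) \<le> 1) (at_right 0)" for u
    using factor is_max that by (rule Re_leading_term_nonpos_at_max)
  show "norm w = 1"
  proof (rule ccontr)
    assume "norm w \<noteq> 1"
    then have interior: "norm w < 1" using assms(3) by simp
    have "c * poly q 0 \<noteq> 0" using assms(2) \<open>poly q 0 \<noteq> 0\<close> by simp
    moreover have "Re (c * poly q 0 * \<zeta> ^ k) \<le> 0" for \<zeta>
    proof -
      have eq: "c * \<zeta> ^ k * poly q 0 = c * poly q 0 * \<zeta> ^ k" by (simp add: mult_ac)
      show ?thesis using key[OF eventually_norm_le_1_interior[OF interior, of \<zeta>]] unfolding eq .
    qed
    ultimately have "k = 1" "Re (c * poly q 0) < 0"
      using nonpos_on_right_half_plane[OF _ \<open>k \<ge> 1\<close>] by blast+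
    moreover have "Re (c * (-1) ^ k * poly q 0) \<le> 0"
      by (rule key[OF eventually_norm_le_1_interior[OF interior]])
    ultimately show False by simp
  qed
  define B where "B = c * (- w) ^ k * poly q 0"
  have "B \<noteq> 0" using assms(2) \<open>poly q 0 \<noteq> 0\<close> \<open>norm w = 1\<close> by (auto simp: B_def)
  moreover have "Re (B * \<zeta> ^ k) \<le> 0" if "Re \<zeta> > 0" for \<zeta>
  proof -
    have eq: "c * (- w * \<zeta>) ^ k * poly q 0 = B * \<zeta> ^ k" by (simp only: B_def power_mult_distrib mult_ac)
    show ?thesis using key[OF eventually_norm_le_1_inward[OF assms(3) that]] unfolding eq .
  qed
  ultimately have "k = 1" "Im B = 0" "Re B < 0"
    using nonpos_on_right_half_plane[OF _ \<open>k \<ge> 1\<close>] by blast+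
  moreover have "c * w * poly (pderiv h) w = - B" by (simp add: B_def \<open>k = 1\<close> deriv)
  ultimately show "Im (c * w * poly (pderiv h) w) = 0" "Re (c * w * poly (pderiv h) w) > 0" by simp_all
qed

lemma max_Re_on_cball_determines_direction:
  fixes h :: "complex poly"
  assumes "degree h \<noteq> 0" and "norm c1 = 1" and "norm c2 = 1" and "norm w \<le> 1"
    and "\<And>z. norm z \<le> 1 \<Longrightarrow> Re (c1 * poly h z) \<le> Re (c1 * poly h w)"
    and "\<And>z. norm z \<le> 1 \<Longrightarrow> Re (c2 * poly h z) \<le> Re (c2 * poly h w)"
  shows "c1 = c2"
proof -
  define A where "A = w * poly (pderiv h) w"
  have "c1 \<noteq> 0" "c2 \<noteq> 0" using assms(2,3) by auto
  then have "Im (c1 * A) = 0" "Re (c1 * A) > 0" "Im (c2 * A) = 0" "Re (c2 * A) > 0"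
    using max_Re_on_cball_at_boundary(2,3)[OF assms(1) _ assms(4)] assms(5,6)
    by (simp_all add: A_def mult.assoc)
  then have "c1 * A = of_real (norm (c1 * A))" "c2 * A = of_real (norm (c2 * A))"
    by (simp_all add: complex_eq_iff cmod_eq_Re)
  moreover have "norm (c1 * A) = norm (c2 * A)" using assms(2,3) by (simp add: norm_mult)
  ultimately have "c1 * A = c2 * A" by simp
  moreover have "A \<noteq> 0" using \<open>Re (c1 * A) > 0\<close> by auto
  ultimately show "c1 = c2" by simp
qed

section \<open>A point at which the divided difference has no zeros on the closed disc\<close>

lemma infinite_unit_circle: "infinite (sphere (0::complex) 1)"
proof
  assume "finite (sphere (0::complex) 1)"
  then obtain a where "sphere (0::complex) 1 = {a}"
    using connected_finite_iff_sing[OF connected_sphere[of "0::complex" 1]] by auto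
  moreover have "1 \<in> sphere (0::complex) 1" "-1 \<in> sphere (0::complex) 1" by simp_all
  ultimately show False by auto
qed

lemma divided_diff_nonzero_if_max_Re_without_twin:
  fixes h :: "complex poly"
  assumes "degree h \<noteq> 0" and "c \<noteq> 0" and "norm w \<le> 1"
    and is_max: "\<And>z. norm z \<le> 1 \<Longrightarrow> Re (c * poly h z) \<le> Re (c * poly h w)"
    and no_twin: "w \<notin> {w \<in> sphere 0 1. \<exists>z \<in> sphere 0 1. z \<noteq> w \<and> poly h z = poly h w}"
    and "norm z \<le> 1"
  shows "divided_diff h z w \<noteq> 0"
proof
  note w = max_Re_on_cball_at_boundary[OF assms(1-4)]
  assume zero: "divided_diff h z w = 0"
  show False
  proof (cases "z = w")
    case True
    then show False using zero w(3) by (auto simp: divided_diff_diag)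
  next
    case False
    then have "poly h z = poly h w" using zero divided_diff_mult_diff[of z w h] by simp
    then have "norm z = 1"
      using is_max by (intro max_Re_on_cball_at_boundary(1)[OF assms(1,2,6)]) simp
    then show False using no_twin False w(1) \<open>poly h z = poly h w\<close> by auto
  qed
qed

lemma exists_divided_diff_nonzero_on_cball:
  fixes h :: "complex poly"
  assumes "\<not> (\<exists>m>1. \<exists>g. h = pcompose g (monom 1 m))"
  obtains w0 where "norm w0 = 1" and "\<And>z. norm z \<le> 1 \<Longrightarrow> divided_diff h z w0 \<noteq> 0"
proof -
  let ?T = "{w \<in> sphere 0 1. \<exists>z \<in> sphere 0 1. z \<noteq> w \<and> poly h z = poly h w}"
  have "degree h \<noteq> 0" using assms pcompose_monom_if_degree_0 by blast
  have "\<exists>w\<in>cball 0 1. \<forall>z\<in>cball 0 1. Re (c * poly h z) \<le> Re (c * poly h w)" for c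
    by (intro continuous_attains_sup) (auto intro!: continuous_intros)
  then have "\<forall>c. \<exists>w. norm w \<le> 1 \<and> (\<forall>z. norm z \<le> 1 \<longrightarrow> Re (c * poly h z) \<le> Re (c * poly h w))"
    unfolding mem_cball_0[symmetric] by blast
  then obtain W where W: "\<And>c. norm (W c) \<le> 1"
    and W_max: "\<And>c z. norm z \<le> 1 \<Longrightarrow> Re (c * poly h z) \<le> Re (c * poly h (W c))"
    by (auto dest!: choice)
  have "inj_on W (sphere 0 1)"
  proof (rule inj_onI)
    fix c1 c2 :: complex assume c: "c1 \<in> sphere 0 1" "c2 \<in> sphere 0 1" and "W c1 = W c2"
    then have "Re (c2 * poly h z) \<le> Re (c2 * poly h (W c1))" if "norm z \<le> 1" for z
      using W_max[OF that, of c2] by simp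
    then show "c1 = c2"
      using max_Re_on_cball_determines_direction[OF \<open>degree h \<noteq> 0\<close> _ _ W W_max] c by simp
  qed
  then have "infinite (W ` sphere 0 1)" using infinite_unit_circle finite_imageD by blast
  then have "\<not> W ` sphere 0 1 \<subseteq> ?T" using finite_twins_on_circle[OF assms] finite_subset by blast
  then obtain c where "c \<in> sphere 0 1" and "W c \<notin> ?T" by blast
  then have "c \<noteq> 0" by auto
  show ?thesis
  proof (rule that)
    show "norm (W c) = 1" using max_Re_on_cball_at_boundary(1)[OF \<open>degree h \<noteq> 0\<close> \<open>c \<noteq> 0\<close> W W_max] .
    show "divided_diff h z (W c) \<noteq> 0" if "norm z \<le> 1" for z
      using divided_diff_nonzero_if_max_Re_without_twin[OF \<open>degree h \<noteq> 0\<close> \<open>c \<noteq> 0\<close> W W_max \<open>W c \<notin> ?T\<close> that] .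
  qed
qed

lemma divided_diff_nonzero_near:
  fixes h :: "complex poly"
  assumes "compact K" and "\<And>z. z \<in> K \<Longrightarrow> divided_diff h z w0 \<noteq> 0"
  obtains \<delta> where "\<delta> > 0" and "\<And>w z. w \<in> ball w0 \<delta> \<Longrightarrow> z \<in> K \<Longrightarrow> divided_diff h z w \<noteq> 0"
proof -
  let ?W = "{x. divided_diff h (snd x) (fst x) \<noteq> 0}"
  have "continuous_on UNIV (\<lambda>x. divided_diff h (snd x) (fst x))"
    by (intro continuous_on_divided_diff continuous_on_fst continuous_on_snd continuous_on_id)
  then have "open ?W"
    using continuous_on_const by (rule open_Collect_neq)
  moreover have "{w0} \<times> K \<subseteq> ?W" using assms(2) by auto
  ultimately have "\<exists>X. w0 \<in> X \<and> open X \<and> X \<times> K \<subseteq> ?W" by (rule Elementary_Topology.tube_lemma[OF assms(1)])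
  then obtain X where X: "w0 \<in> X" "open X" "X \<times> K \<subseteq> ?W" by blast
  obtain \<delta> where "\<delta> > 0" "ball w0 \<delta> \<subseteq> X" using openE[OF X(2,1)] .
  show ?thesis
  proof (rule that[OF \<open>\<delta> > 0\<close>])
    fix w z assume "w \<in> ball w0 \<delta>" "z \<in> K"
    then have "(w, z) \<in> X \<times> K" using \<open>ball w0 \<delta> \<subseteq> X\<close> by blast
    then show "divided_diff h z w \<noteq> 0" using X(3) by auto
  qed
qed

theorem proposition0p1:
  fixes h :: "complex poly"
  assumes "\<not> (\<exists>m::nat. m > 1 \<and> (\<exists>g :: complex poly. h = pcompose g (monom 1 m)))"
  shows "\<exists>U. open U \<and> U \<noteq> {} \<and> U \<subseteq> ball 0 1 \<and>
           (\<forall>w\<in>U. \<forall>z\<in>cball 0 1. diff_quot h z w \<noteq> 0)"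
proof -
  obtain w0 where "norm w0 = 1" and w0: "\<And>z. norm z \<le> 1 \<Longrightarrow> divided_diff h z w0 \<noteq> 0"
    using exists_divided_diff_nonzero_on_cball assms by blast
  obtain \<delta> where "\<delta> > 0"
    and near: "\<And>w z. w \<in> ball w0 \<delta> \<Longrightarrow> z \<in> cball 0 1 \<Longrightarrow> divided_diff h z w \<noteq> 0"
    using divided_diff_nonzero_near[of "cball 0 1" h w0] w0 by auto
  define U where "U = ball w0 \<delta> \<inter> ball 0 1"
  have "w0 \<in> ball w0 \<delta> \<inter> closure (ball 0 1)" using \<open>norm w0 = 1\<close> \<open>\<delta> > 0\<close> by simp
  then have "U \<noteq> {}"
    unfolding U_def using open_Int_closure_eq_empty[of "ball w0 \<delta>" "ball 0 1"] by blast
  moreover have "\<forall>w\<in>U. \<forall>z\<in>cball 0 1. diff_quot h z w \<noteq> 0"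
    using near by (simp add: U_def diff_quot_eq_divided_diff)
  ultimately show ?thesis by (intro exI[of _ U]) (auto simp: U_def)
qed

end
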